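(* Let $\mathbf{t}:\mathcal{D}\to\mathcal{T}$ be a closed monoidal refinement system. Then, whenever the pullbacks and pushforwards involved exist, there are vertical isomorphisms: (a) for $c:A\to A'$, $d:B\to B'$, $P\sqsubset A$, $Q\sqsubset B$: $(c\otimes d)_!(P\otimes Q)\cong c_!P\otimes d_!Q$; (b) for $c:A\to A'$, $d:C'\to C$, $P\sqsubset A$, $R\sqsubset C$: $(c_!P)\backslash(d^*R)\cong (c\backslash d)^*(P\backslash R)$, where $c\backslash d:A'\backslash C'\to A\backslash C$ is the action of the left residual functor $\backslash:\mathcal T^{op}\times\mathcal T\to\mathcal T$; (c) for $c:B\to B'$, $d:C'\to C$, $Q\sqsubset B$, $R\sqsubset C$: $(d^*R)/(c_!Q)\cong (d/c)^*(R/Q)$, where $d/c:C'/B'\to C/B$ is the action of the right residual functor $/:\mathcal T\times\mathcal T^{op}\to\mathcal T$.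
   Context: A refinement system is a functor $\mathbf{t}:\mathcal{D}\to\mathcal{T}$; composition is written diagrammatically ($c;d$ = first $c$ then $d$). Write $P\sqsubset A$ if $\mathbf t(P)=A$; a derivation of $P\Rightarrow_c Q$ ($c:A\to B$, $P\sqsubset A$, $Q\sqsubset B$) is a morphism $\alpha:P\to Q$ with $\mathbf t(\alpha)=c$. Refinements $P,Q\sqsubset A$ are vertically isomorphic ($P\cong Q$) if there is an isomorphism $P\to Q$ mapped to $\mathrm{id}_A$. A pullback of $Q\sqsubset B$ along $c:A\to B$ is $c^*Q\sqsubset A$ with a derivation $\lambda$ of $c^*Q\Rightarrow_cQ$ such that for all $P\sqsubset X$, $d:X\to A$, post-composition with $\lambda$ is a bijection from derivations of $P\Rightarrow_d c^*Q$ to derivations of $P\Rightarrow_{d;c}Q$. A pushforward of $P\sqsubset A$ along $c:A\to B$ is $c_!P\sqsubset B$ with a derivation $\kappa$ of $P\Rightarrow_c c_!P$ such that for all $Q\sqsubset Y$, $d:B\to Y$, pre-composition with $\kappa$ is a bijection from derivations of $c_!P\Rightarrow_dQ$ to derivations of $P\Rightarrow_{c;d}Q$. A monoidal category is closed if it has a left residual $X\backslash Z$ and right residual $Z/Y$ with natural bijections $\mathcal C(Y,X\backslash Z)\cong\mathcal C(X\otimes Y,Z)\cong\mathcal C(X,Z/Y)$. A closed monoidal refinement system is a functor $\mathbf t:\mathcal D\to\mathcal T$ between closed monoidal categories which strictly preserves tensor products, unit, and both residuals (together with their structure maps), so that $P\otimes Q\sqsubset A\otimes B$, $P\backslash R\sqsubset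 A\backslash C$, $R/Q\sqsubset C/B$ whenever $P\sqsubset A$, $Q\sqsubset B$, $R\sqsubset C$. *)

theory Defs
  imports Main
begin

record ('o, 'm) cat =
  Obj :: "'o set"
  Hom :: "'o \<Rightarrow> 'o \<Rightarrow> 'm set"
  cmp :: "'m \<Rightarrow> 'm \<Rightarrow> 'm"   (* cmp f g = f ; g  (first f, then g) *)
  idm :: "'o \<Rightarrow> 'm"

definition category :: "('o, 'm, 'z) cat_scheme \<Rightarrow> bool" where
  "category C \<longleftrightarrow>
     (\<forall>A B f. f \<in> Hom C A B \<longrightarrow> A \<in> Obj C \<and> B \<in> Obj C) \<and>
     (\<forall>A B A' B' f. f \<in> Hom C A B \<longrightarrow> f \<in> Hom C A' B' \<longrightarrow> A = A' \<and> B = B') \<and>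
     (\<forall>A \<in> Obj C. idm C A \<in> Hom C A A) \<and>
     (\<forall>A B E f g. f \<in> Hom C A B \<longrightarrow> g \<in> Hom C B E \<longrightarrow> cmp C f g \<in> Hom C A E) \<and>
     (\<forall>A B f. f \<in> Hom C A B \<longrightarrow> cmp C (idm C A) f = f \<and> cmp C f (idm C B) = f) \<and>
     (\<forall>A B E F f g h. f \<in> Hom C A B \<longrightarrow> g \<in> Hom C B E \<longrightarrow> h \<in> Hom C E F \<longrightarrow>
        cmp C (cmp C f g) h = cmp C f (cmp C g h))"

definition is_iso :: "('o, 'm, 'z) cat_scheme \<Rightarrow> 'o \<Rightarrow> 'o \<Rightarrow> 'm \<Rightarrow> bool" where
  "is_iso C A B f \<longleftrightarrow> f \<in> Hom C A B \<and>
     (\<exists>g \<in> Hom C B A. cmp C f g = idm C A \<and> cmp C g f = idm C B)"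

definition is_functor ::
  "('o1, 'm1, 'z1) cat_scheme \<Rightarrow> ('o2, 'm2, 'z2) cat_scheme \<Rightarrow> ('o1 \<Rightarrow> 'o2) \<Rightarrow> ('m1 \<Rightarrow> 'm2) \<Rightarrow> bool" where
  "is_functor C D Fo Fm \<longleftrightarrow>
     (\<forall>A \<in> Obj C. Fo A \<in> Obj D) \<and>
     (\<forall>A B f. f \<in> Hom C A B \<longrightarrow> Fm f \<in> Hom D (Fo A) (Fo B)) \<and>
     (\<forall>A \<in> Obj C. Fm (idm C A) = idm D (Fo A)) \<and>
     (\<forall>A B E f g. f \<in> Hom C A B \<longrightarrow> g \<in> Hom C B E \<longrightarrow> Fm (cmp C f g) = cmp D (Fm f) (Fm g))"

record ('o, 'm) mcat = "('o, 'm) cat" +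
  tens_o :: "'o \<Rightarrow> 'o \<Rightarrow> 'o"
  tens_m :: "'m \<Rightarrow> 'm \<Rightarrow> 'm"
  unit_o :: "'o"
  asc :: "'o \<Rightarrow> 'o \<Rightarrow> 'o \<Rightarrow> 'm"
  lu :: "'o \<Rightarrow> 'm"
  ru :: "'o \<Rightarrow> 'm"
  ldiv :: "'o \<Rightarrow> 'o \<Rightarrow> 'o"              (* ldiv X Z = X \ Z *)
  evL :: "'o \<Rightarrow> 'o \<Rightarrow> 'm"
  rdiv :: "'o \<Rightarrow> 'o \<Rightarrow> 'o"              (* rdiv Z Y = Z / Y *)
  evR :: "'o \<Rightarrow> 'o \<Rightarrow> 'm"

definition monoidal :: "('o, 'm, 'z) mcat_scheme \<Rightarrow> bool" where
  "monoidal C \<longleftrightarrow> category C \<and>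
     unit_o C \<in> Obj C \<and>
     (\<forall>A \<in> Obj C. \<forall>B \<in> Obj C. tens_o C A B \<in> Obj C) \<and>
     (\<forall>A B A' B' f g. f \<in> Hom C A B \<longrightarrow> g \<in> Hom C A' B' \<longrightarrow>
        tens_m C f g \<in> Hom C (tens_o C A A') (tens_o C B B')) \<and>
     (\<forall>A \<in> Obj C. \<forall>B \<in> Obj C. tens_m C (idm C A) (idm C B) = idm C (tens_o C A B)) \<and>
     (\<forall>A B E A' B' E' f g f' g'. f \<in> Hom C A B \<longrightarrow> g \<in> Hom C B E \<longrightarrow>
        f' \<in> Hom C A' B' \<longrightarrow> g' \<in> Hom C B' E' \<longrightarrow>
        tens_m C (cmp C f g) (cmp C f' g') = cmp C (tens_m C f f') (tens_m C g g')) \<and>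
     (\<forall>A \<in> Obj C. \<forall>B \<in> Obj C. \<forall>E \<in> Obj C.
        is_iso C (tens_o C (tens_o C A B) E) (tens_o C A (tens_o C B E)) (asc C A B E)) \<and>
     (\<forall>A \<in> Obj C. is_iso C (tens_o C (unit_o C) A) A (lu C A)) \<and>
     (\<forall>A \<in> Obj C. is_iso C (tens_o C A (unit_o C)) A (ru C A)) \<and>
     (\<forall>A B A' B' A'' B'' f g h. f \<in> Hom C A B \<longrightarrow> g \<in> Hom C A' B' \<longrightarrow> h \<in> Hom C A'' B'' \<longrightarrow>
        cmp C (tens_m C (tens_m C f g) h) (asc C B B' B'') =
        cmp C (asc C A A' A'') (tens_m C f (tens_m C g h))) \<and>
     (\<forall>A B f. f \<in> Hom C A B \<longrightarrow>
        cmp C (tens_m C (idm C (unit_o C)) f) (lu C B) = cmp C (lu C A) f) \<and>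
     (\<forall>A B f. f \<in> Hom C A B \<longrightarrow>
        cmp C (tens_m C f (idm C (unit_o C))) (ru C B) = cmp C (ru C A) f) \<and>
     (\<forall>A \<in> Obj C. \<forall>B \<in> Obj C. \<forall>E \<in> Obj C. \<forall>F \<in> Obj C.
        cmp C (asc C (tens_o C A B) E F) (asc C A B (tens_o C E F)) =
        cmp C (cmp C (tens_m C (asc C A B E) (idm C F)) (asc C A (tens_o C B E) F))
              (tens_m C (idm C A) (asc C B E F))) \<and>
     (\<forall>A \<in> Obj C. \<forall>B \<in> Obj C.
        cmp C (asc C A (unit_o C) B) (tens_m C (idm C A) (lu C B)) =
        tens_m C (ru C A) (idm C B))"

text \<open>Closedness: left and right residuals given by universal evaluation maps; this
  is equivalent to the natural bijections
  Hom(Y, X\Z) = Hom(X (x) Y, Z) = Hom(X, Z/Y).\<close>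

definition closed_monoidal :: "('o, 'm, 'z) mcat_scheme \<Rightarrow> bool" where
  "closed_monoidal C \<longleftrightarrow> monoidal C \<and>
     (\<forall>X \<in> Obj C. \<forall>Z \<in> Obj C.
        ldiv C X Z \<in> Obj C \<and>
        evL C X Z \<in> Hom C (tens_o C X (ldiv C X Z)) Z \<and>
        (\<forall>Y f. f \<in> Hom C (tens_o C X Y) Z \<longrightarrow>
           (\<exists>!g. g \<in> Hom C Y (ldiv C X Z) \<and> cmp C (tens_m C (idm C X) g) (evL C X Z) = f))) \<and>
     (\<forall>Y \<in> Obj C. \<forall>Z \<in> Obj C.
        rdiv C Z Y \<in> Obj C \<and>
        evR C Z Y \<in> Hom C (tens_o C (rdiv C Z Y) Y) Z \<and>
        (\<forall>X f. f \<in> Hom C (tens_o C X Y) Z \<longrightarrow>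
           (\<exists>!g. g \<in> Hom C X (rdiv C Z Y) \<and> cmp C (tens_m C g (idm C Y)) (evR C Z Y) = f)))"

text \<open>Action of the left residual functor on morphisms: for c : A \<rightarrow> A', d : C' \<rightarrow> Cc,
  ldiv_m C A A' C' Cc c d : A'\C' \<rightarrow> A\Cc.\<close>

definition ldiv_m :: "('o, 'm, 'z) mcat_scheme \<Rightarrow> 'o \<Rightarrow> 'o \<Rightarrow> 'o \<Rightarrow> 'o \<Rightarrow> 'm \<Rightarrow> 'm \<Rightarrow> 'm" where
  "ldiv_m C A A' C' Cc c d = (THE g. g \<in> Hom C (ldiv C A' C') (ldiv C A Cc) \<and>
      cmp C (tens_m C (idm C A) g) (evL C A Cc) =
      cmp C (cmp C (tens_m C c (idm C (ldiv C A' C'))) (evL C A' C')) d)"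

text \<open>Action of the right residual functor on morphisms: for d : C' \<rightarrow> Cc, c : B \<rightarrow> B',
  rdiv_m C B B' C' Cc d c : C'/B' \<rightarrow> Cc/B.\<close>

definition rdiv_m :: "('o, 'm, 'z) mcat_scheme \<Rightarrow> 'o \<Rightarrow> 'o \<Rightarrow> 'o \<Rightarrow> 'o \<Rightarrow> 'm \<Rightarrow> 'm \<Rightarrow> 'm" where
  "rdiv_m C B B' C' Cc d c = (THE g. g \<in> Hom C (rdiv C C' B') (rdiv C Cc B) \<and>
      cmp C (tens_m C g (idm C B)) (evR C Cc B) =
      cmp C (cmp C (tens_m C (idm C (rdiv C C' B')) c) (evR C C' B')) d)"

text \<open>A refinement system t : D \<rightarrow> T is given by its object part to and morphism part tm.\<close>

definition refines :: "('p, 'q, 'z) cat_scheme \<Rightarrow> ('p \<Rightarrow> 'a) \<Rightarrow> 'p \<Rightarrow> 'a \<Rightarrow> bool" where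
  "refines D to P A \<longleftrightarrow> P \<in> Obj D \<and> to P = A"

definition derivs :: "('p, 'q, 'z) cat_scheme \<Rightarrow> ('q \<Rightarrow> 'c) \<Rightarrow> 'p \<Rightarrow> 'c \<Rightarrow> 'p \<Rightarrow> 'q set" where
  "derivs D tm P c Q = {\<alpha>. \<alpha> \<in> Hom D P Q \<and> tm \<alpha> = c}"

definition closed_monoidal_refinement_system ::
  "('p, 'q, 'z1) mcat_scheme \<Rightarrow> ('a, 'c, 'z2) mcat_scheme \<Rightarrow> ('p \<Rightarrow> 'a) \<Rightarrow> ('q \<Rightarrow> 'c) \<Rightarrow> bool" where
  "closed_monoidal_refinement_system D T to tm \<longleftrightarrow>
     closed_monoidal D \<and> closed_monoidal T \<and> is_functor D T to tm \<and>
     (\<forall>P \<in> Obj D. \<forall>Q \<in> Obj D. to (tens_o D P Q) = tens_o T (to P) (to Q)) \<and>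
     (\<forall>P P' Q Q' \<alpha> \<beta>. \<alpha> \<in> Hom D P P' \<longrightarrow> \<beta> \<in> Hom D Q Q' \<longrightarrow>
        tm (tens_m D \<alpha> \<beta>) = tens_m T (tm \<alpha>) (tm \<beta>)) \<and>
     to (unit_o D) = unit_o T \<and>
     (\<forall>P \<in> Obj D. \<forall>Q \<in> Obj D. \<forall>R \<in> Obj D. tm (asc D P Q R) = asc T (to P) (to Q) (to R)) \<and>
     (\<forall>P \<in> Obj D. tm (lu D P) = lu T (to P) \<and> tm (ru D P) = ru T (to P)) \<and>
     (\<forall>P \<in> Obj D. \<forall>R \<in> Obj D.
        to (ldiv D P R) = ldiv T (to P) (to R) \<and> tm (evL D P R) = evL T (to P) (to R) \<and>
        to (rdiv D R P) = rdiv T (to R) (to P) \<and> tm (evR D R P) = evR T (to R) (to P))"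

text \<open>P' (with derivation lam of P' \<Rightarrow>_c Q) is a pullback c^*Q of Q along c : A \<rightarrow> B.\<close>

definition is_pullback ::
  "('p, 'q, 'z1) cat_scheme \<Rightarrow> ('a, 'c, 'z2) cat_scheme \<Rightarrow> ('p \<Rightarrow> 'a) \<Rightarrow> ('q \<Rightarrow> 'c) \<Rightarrow>
   'a \<Rightarrow> 'a \<Rightarrow> 'c \<Rightarrow> 'p \<Rightarrow> 'p \<Rightarrow> 'q \<Rightarrow> bool" where
  "is_pullback D T to tm A B c Q P' lam \<longleftrightarrow>
     c \<in> Hom T A B \<and> refines D to Q B \<and> refines D to P' A \<and> lam \<in> derivs D tm P' c Q \<and>
     (\<forall>X P d. refines D to P X \<longrightarrow> d \<in> Hom T X A \<longrightarrow>
        bij_betw (\<lambda>\<beta>. cmp D \<beta> lam) (derivs D tm P d P') (derivs D tm P (cmp T d c) Q))"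

text \<open>Q' (with derivation kap of P \<Rightarrow>_c Q') is a pushforward c_!P of P along c : A \<rightarrow> B.\<close>

definition is_pushforward ::
  "('p, 'q, 'z1) cat_scheme \<Rightarrow> ('a, 'c, 'z2) cat_scheme \<Rightarrow> ('p \<Rightarrow> 'a) \<Rightarrow> ('q \<Rightarrow> 'c) \<Rightarrow>
   'a \<Rightarrow> 'a \<Rightarrow> 'c \<Rightarrow> 'p \<Rightarrow> 'p \<Rightarrow> 'q \<Rightarrow> bool" where
  "is_pushforward D T to tm A B c P Q' kap \<longleftrightarrow>
     c \<in> Hom T A B \<and> refines D to P A \<and> refines D to Q' B \<and> kap \<in> derivs D tm P c Q' \<and>
     (\<forall>Y Q d. refines D to Q Y \<longrightarrow> d \<in> Hom T B Y \<longrightarrow>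
        bij_betw (\<lambda>\<beta>. cmp D kap \<beta>) (derivs D tm Q' d Q) (derivs D tm P (cmp T c d) Q))"

definition vert_iso ::
  "('p, 'q, 'z1) cat_scheme \<Rightarrow> ('a, 'c, 'z2) cat_scheme \<Rightarrow> ('p \<Rightarrow> 'a) \<Rightarrow> ('q \<Rightarrow> 'c) \<Rightarrow>
   'a \<Rightarrow> 'p \<Rightarrow> 'p \<Rightarrow> bool" where
  "vert_iso D T to tm A P Q \<longleftrightarrow> refines D to P A \<and> refines D to Q A \<and>
     (\<exists>f. is_iso D P Q f \<and> tm f = idm T A)"

end

theory Submission
  imports Defs
begin

text \<open>Currying is the engine. Derivations out of \<open>P' \<otimes> X\<close> correspond to derivations
  out of \<open>P'\<close> into the residual \<open>Z / X\<close>, where the universal property of a pushforward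
  \<open>P \<Rightarrow> P'\<close> applies; so tensoring a pushforward with an identity gives a pushforward.
  Since pushforwards compose, \<open>k\<^sub>1 \<otimes> k\<^sub>2 = (id \<otimes> k\<^sub>2); (k\<^sub>1 \<otimes> id)\<close> exhibits
  \<open>c\<^sub>!P \<otimes> d\<^sub>!Q\<close> as a pushforward, and pushforwards are unique up to vertical isomorphism.
  For residuals, derivations \<open>W \<Rightarrow> P' \ R'\<close> curry to derivations \<open>P' \<otimes> W \<Rightarrow> R'\<close>; the pullback
  property of \<open>R'\<close> and then the pushforward property of \<open>P \<otimes> W \<Rightarrow> P' \<otimes> W\<close> identify
  these with derivations \<open>P \<otimes> W \<Rightarrow> R\<close>, i.e. with derivations \<open>W \<Rightarrow> P \ R\<close>. Hence
  \<open>(c\<^sub>!P) \ (d\<^sup>*R)\<close> is a pullback of \<open>P \ R\<close> along \<open>c \ d\<close>, and likewise for \<open>/\<close>.\<close>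

locale closed_mcat =
  fixes C :: "('o, 'm, 'z) mcat_scheme"
  assumes closed: "closed_monoidal C"
begin

lemma monoidal: "monoidal C"
  using closed unfolding closed_monoidal_def by blast

lemma category: "category C"
  using monoidal unfolding monoidal_def by blast

lemma hom_dom: "f \<in> Hom C A B \<Longrightarrow> A \<in> Obj C"
  using category unfolding category_def by (elim conjE) metis

lemma hom_cod: "f \<in> Hom C A B \<Longrightarrow> B \<in> Obj C"
  using category unfolding category_def by (elim conjE) metis

lemma id_hom: "A \<in> Obj C \<Longrightarrow> idm C A \<in> Hom C A A"
  using category unfolding category_def by (elim conjE) metis

lemma comp_hom: "f \<in> Hom C A B \<Longrightarrow> g \<in> Hom C B E \<Longrightarrow> cmp C f g \<in> Hom C A E"
  using category unfolding category_def by (elim conjE) metis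

lemma comp_id_left: "f \<in> Hom C A B \<Longrightarrow> cmp C (idm C A) f = f"
  using category unfolding category_def by (elim conjE) metis

lemma comp_id_right: "f \<in> Hom C A B \<Longrightarrow> cmp C f (idm C B) = f"
  using category unfolding category_def by (elim conjE) metis

lemma comp_assoc: "f \<in> Hom C A B \<Longrightarrow> g \<in> Hom C B E \<Longrightarrow> h \<in> Hom C E F \<Longrightarrow>
   cmp C (cmp C f g) h = cmp C f (cmp C g h)"
  using category unfolding category_def by (elim conjE) metis

lemma tens_obj: "A \<in> Obj C \<Longrightarrow> B \<in> Obj C \<Longrightarrow> tens_o C A B \<in> Obj C"
  using monoidal unfolding monoidal_def by (elim conjE) blast

lemma tens_hom: "f \<in> Hom C A B \<Longrightarrow> g \<in> Hom C A' B' \<Longrightarrow>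
   tens_m C f g \<in> Hom C (tens_o C A A') (tens_o C B B')"
  using monoidal unfolding monoidal_def by (elim conjE) blast

lemma tens_comp: "f \<in> Hom C A B \<Longrightarrow> g \<in> Hom C B E \<Longrightarrow> f' \<in> Hom C A' B' \<Longrightarrow> g' \<in> Hom C B' E' \<Longrightarrow>
   tens_m C (cmp C f g) (cmp C f' g') = cmp C (tens_m C f f') (tens_m C g g')"
  using monoidal unfolding monoidal_def by (elim conjE) blast

lemma tens_factor_fst:
  assumes f: "f \<in> Hom C A A'" and g: "g \<in> Hom C B B'"
  shows "tens_m C f g = cmp C (tens_m C f (idm C B)) (tens_m C (idm C A') g)"
  using tens_comp[OF f id_hom[OF hom_cod[OF f]] id_hom[OF hom_dom[OF g]] g]
  by (simp add: comp_id_left[OF g] comp_id_right[OF f])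

lemma tens_factor_snd:
  assumes f: "f \<in> Hom C A A'" and g: "g \<in> Hom C B B'"
  shows "tens_m C f g = cmp C (tens_m C (idm C A) g) (tens_m C f (idm C B'))"
  using tens_comp[OF id_hom[OF hom_dom[OF f]] f g id_hom[OF hom_cod[OF g]]]
  by (simp add: comp_id_left[OF f] comp_id_right[OF g])

lemma ldiv_obj: "X \<in> Obj C \<Longrightarrow> Z \<in> Obj C \<Longrightarrow> ldiv C X Z \<in> Obj C"
  using closed unfolding closed_monoidal_def by (elim conjE) metis

lemma evL_hom: "X \<in> Obj C \<Longrightarrow> Z \<in> Obj C \<Longrightarrow> evL C X Z \<in> Hom C (tens_o C X (ldiv C X Z)) Z"
  using closed unfolding closed_monoidal_def by (elim conjE) metis

lemma curryL_ex1: "X \<in> Obj C \<Longrightarrow> Z \<in> Obj C \<Longrightarrow> f \<in> Hom C (tens_o C X Y) Z \<Longrightarrow>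
   \<exists>!g. g \<in> Hom C Y (ldiv C X Z) \<and> cmp C (tens_m C (idm C X) g) (evL C X Z) = f"
  using closed unfolding closed_monoidal_def by (elim conjE) metis

lemma rdiv_obj: "Y \<in> Obj C \<Longrightarrow> Z \<in> Obj C \<Longrightarrow> rdiv C Z Y \<in> Obj C"
  using closed unfolding closed_monoidal_def by (elim conjE) metis

lemma evR_hom: "Y \<in> Obj C \<Longrightarrow> Z \<in> Obj C \<Longrightarrow> evR C Z Y \<in> Hom C (tens_o C (rdiv C Z Y) Y) Z"
  using closed unfolding closed_monoidal_def by (elim conjE) metis

lemma curryR_ex1: "Y \<in> Obj C \<Longrightarrow> Z \<in> Obj C \<Longrightarrow> f \<in> Hom C (tens_o C X Y) Z \<Longrightarrow>
   \<exists>!g. g \<in> Hom C X (rdiv C Z Y) \<and> cmp C (tens_m C g (idm C Y)) (evR C Z Y) = f"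
  using closed unfolding closed_monoidal_def by (elim conjE) metis

lemma uncurryL_hom:
  "X \<in> Obj C \<Longrightarrow> Z \<in> Obj C \<Longrightarrow> g \<in> Hom C Y (ldiv C X Z) \<Longrightarrow>
   cmp C (tens_m C (idm C X) g) (evL C X Z) \<in> Hom C (tens_o C X Y) Z"
  by (rule comp_hom[OF tens_hom[OF id_hom] evL_hom])

lemma uncurryR_hom:
  "Y \<in> Obj C \<Longrightarrow> Z \<in> Obj C \<Longrightarrow> g \<in> Hom C X (rdiv C Z Y) \<Longrightarrow>
   cmp C (tens_m C g (idm C Y)) (evR C Z Y) \<in> Hom C (tens_o C X Y) Z"
  by (rule comp_hom[OF tens_hom[OF _ id_hom] evR_hom])

lemma curryL_ex:
  "X \<in> Obj C \<Longrightarrow> Z \<in> Obj C \<Longrightarrow> f \<in> Hom C (tens_o C X Y) Z \<Longrightarrow>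
   \<exists>g \<in> Hom C Y (ldiv C X Z). cmp C (tens_m C (idm C X) g) (evL C X Z) = f"
  by (drule (2) curryL_ex1) blast

lemma curryR_ex:
  "Y \<in> Obj C \<Longrightarrow> Z \<in> Obj C \<Longrightarrow> f \<in> Hom C (tens_o C X Y) Z \<Longrightarrow>
   \<exists>g \<in> Hom C X (rdiv C Z Y). cmp C (tens_m C g (idm C Y)) (evR C Z Y) = f"
  by (drule (2) curryR_ex1) blast

lemma curryL_unique:
  assumes X: "X \<in> Obj C" and Z: "Z \<in> Obj C"
    and g1: "g1 \<in> Hom C Y (ldiv C X Z)" and g2: "g2 \<in> Hom C Y (ldiv C X Z)"
    and eq: "cmp C (tens_m C (idm C X) g1) (evL C X Z) = cmp C (tens_m C (idm C X) g2) (evL C X Z)"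
  shows "g1 = g2"
proof -
  from curryL_ex1[OF X Z uncurryL_hom[OF X Z g1]]
  obtain g where "\<And>h. h \<in> Hom C Y (ldiv C X Z) \<and>
      cmp C (tens_m C (idm C X) h) (evL C X Z) = cmp C (tens_m C (idm C X) g1) (evL C X Z) \<Longrightarrow> h = g"
    by (elim ex1E) blast
  from this[of g1] this[of g2] show ?thesis using g1 g2 eq by simp
qed

lemma curryR_unique:
  assumes Y: "Y \<in> Obj C" and Z: "Z \<in> Obj C"
    and g1: "g1 \<in> Hom C X (rdiv C Z Y)" and g2: "g2 \<in> Hom C X (rdiv C Z Y)"
    and eq: "cmp C (tens_m C g1 (idm C Y)) (evR C Z Y) = cmp C (tens_m C g2 (idm C Y)) (evR C Z Y)"
  shows "g1 = g2"
proof -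
  from curryR_ex1[OF Y Z uncurryR_hom[OF Y Z g1]]
  obtain g where "\<And>h. h \<in> Hom C X (rdiv C Z Y) \<and>
      cmp C (tens_m C h (idm C Y)) (evR C Z Y) = cmp C (tens_m C g1 (idm C Y)) (evR C Z Y) \<Longrightarrow> h = g"
    by (elim ex1E) blast
  from this[of g1] this[of g2] show ?thesis using g1 g2 eq by simp
qed

lemma uncurryL_comp:
  assumes f: "f \<in> Hom C W' W" and g: "g \<in> Hom C W (ldiv C X Z)" and X: "X \<in> Obj C" and Z: "Z \<in> Obj C"
  shows "cmp C (tens_m C (idm C X) (cmp C f g)) (evL C X Z) =
    cmp C (tens_m C (idm C X) f) (cmp C (tens_m C (idm C X) g) (evL C X Z))"
proof -
  have "tens_m C (idm C X) (cmp C f g) = cmp C (tens_m C (idm C X) f) (tens_m C (idm C X) g)"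
    using tens_comp[OF id_hom[OF X] id_hom[OF X] f g] comp_id_left[OF id_hom[OF X]] by simp
  then show ?thesis
    using comp_assoc[OF tens_hom[OF id_hom[OF X] f] tens_hom[OF id_hom[OF X] g] evL_hom[OF X Z]] by simp
qed

lemma uncurryR_comp:
  assumes f: "f \<in> Hom C W' W" and g: "g \<in> Hom C W (rdiv C Z Y)" and Y: "Y \<in> Obj C" and Z: "Z \<in> Obj C"
  shows "cmp C (tens_m C (cmp C f g) (idm C Y)) (evR C Z Y) =
    cmp C (tens_m C f (idm C Y)) (cmp C (tens_m C g (idm C Y)) (evR C Z Y))"
proof -
  have "tens_m C (cmp C f g) (idm C Y) = cmp C (tens_m C f (idm C Y)) (tens_m C g (idm C Y))"
    using tens_comp[OF f g id_hom[OF Y] id_hom[OF Y]] comp_id_left[OF id_hom[OF Y]] by simp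
  then show ?thesis
    using comp_assoc[OF tens_hom[OF f id_hom[OF Y]] tens_hom[OF g id_hom[OF Y]] evR_hom[OF Y Z]] by simp
qed

lemma ldiv_m_hom_eq:
  assumes c: "c \<in> Hom C A A'" and d: "d \<in> Hom C C' Cc"
  shows "ldiv_m C A A' C' Cc c d \<in> Hom C (ldiv C A' C') (ldiv C A Cc)"
    and "cmp C (tens_m C (idm C A) (ldiv_m C A A' C' Cc c d)) (evL C A Cc) =
      cmp C (cmp C (tens_m C c (idm C (ldiv C A' C'))) (evL C A' C')) d"
proof -
  have A': "A' \<in> Obj C" and C': "C' \<in> Obj C" using hom_cod[OF c] hom_dom[OF d] .
  have "cmp C (cmp C (tens_m C c (idm C (ldiv C A' C'))) (evL C A' C')) d
      \<in> Hom C (tens_o C A (ldiv C A' C')) Cc"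
    using comp_hom[OF comp_hom[OF tens_hom[OF c id_hom[OF ldiv_obj[OF A' C']]] evL_hom[OF A' C']] d] .
  from theI'[OF curryL_ex1[OF hom_dom[OF c] hom_cod[OF d] this]]
  show "ldiv_m C A A' C' Cc c d \<in> Hom C (ldiv C A' C') (ldiv C A Cc)"
    and "cmp C (tens_m C (idm C A) (ldiv_m C A A' C' Cc c d)) (evL C A Cc) =
      cmp C (cmp C (tens_m C c (idm C (ldiv C A' C'))) (evL C A' C')) d"
    unfolding ldiv_m_def by blast+
qed

lemma rdiv_m_hom_eq:
  assumes c: "c \<in> Hom C B B'" and d: "d \<in> Hom C C' Cc"
  shows "rdiv_m C B B' C' Cc d c \<in> Hom C (rdiv C C' B') (rdiv C Cc B)"
    and "cmp C (tens_m C (rdiv_m C B B' C' Cc d c) (idm C B)) (evR C Cc B) =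
      cmp C (cmp C (tens_m C (idm C (rdiv C C' B')) c) (evR C C' B')) d"
proof -
  have B': "B' \<in> Obj C" and C': "C' \<in> Obj C" using hom_cod[OF c] hom_dom[OF d] .
  have "cmp C (cmp C (tens_m C (idm C (rdiv C C' B')) c) (evR C C' B')) d
      \<in> Hom C (tens_o C (rdiv C C' B') B) Cc"
    using comp_hom[OF comp_hom[OF tens_hom[OF id_hom[OF rdiv_obj[OF B' C']] c] evR_hom[OF B' C']] d] .
  from theI'[OF curryR_ex1[OF hom_dom[OF c] hom_cod[OF d] this]]
  show "rdiv_m C B B' C' Cc d c \<in> Hom C (rdiv C C' B') (rdiv C Cc B)"
    and "cmp C (tens_m C (rdiv_m C B B' C' Cc d c) (idm C B)) (evR C Cc B) =
      cmp C (cmp C (tens_m C (idm C (rdiv C C' B')) c) (evR C C' B')) d"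
    unfolding rdiv_m_def by blast+
qed

lemma ldiv_m_eqI:
  assumes c: "c \<in> Hom C A A'" and d: "d \<in> Hom C C' Cc"
    and g: "g \<in> Hom C (ldiv C A' C') (ldiv C A Cc)"
    and "cmp C (tens_m C (idm C A) g) (evL C A Cc) =
      cmp C (cmp C (tens_m C c (idm C (ldiv C A' C'))) (evL C A' C')) d"
  shows "ldiv_m C A A' C' Cc c d = g"
  using curryL_unique[OF hom_dom[OF c] hom_cod[OF d] ldiv_m_hom_eq(1)[OF c d] g]
    ldiv_m_hom_eq(2)[OF c d] assms(4) by simp

lemma rdiv_m_eqI:
  assumes c: "c \<in> Hom C B B'" and d: "d \<in> Hom C C' Cc"
    and g: "g \<in> Hom C (rdiv C C' B') (rdiv C Cc B)"
    and "cmp C (tens_m C g (idm C B)) (evR C Cc B) =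
      cmp C (cmp C (tens_m C (idm C (rdiv C C' B')) c) (evR C C' B')) d"
  shows "rdiv_m C B B' C' Cc d c = g"
  using curryR_unique[OF hom_dom[OF c] hom_cod[OF d] rdiv_m_hom_eq(1)[OF c d] g]
    rdiv_m_hom_eq(2)[OF c d] assms(4) by simp

lemma uncurryL_comp_ldiv_m:
  assumes c: "c \<in> Hom C A A'" and d: "d \<in> Hom C C' Cc" and \<beta>: "\<beta> \<in> Hom C W (ldiv C A' C')"
  shows "cmp C (tens_m C (idm C A) (cmp C \<beta> (ldiv_m C A A' C' Cc c d))) (evL C A Cc) =
    cmp C (tens_m C c (idm C W)) (cmp C (cmp C (tens_m C (idm C A') \<beta>) (evL C A' C')) d)"
proof -
  have A: "A \<in> Obj C" and A': "A' \<in> Obj C" and C': "C' \<in> Obj C" and Cc: "Cc \<in> Obj C"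
    using c d by (auto intro: hom_dom hom_cod)
  have L: "ldiv C A' C' \<in> Obj C" using ldiv_obj[OF A' C'] .
  note ev = evL_hom[OF A' C'] and m = ldiv_m_hom_eq[OF c d]
  have c_id: "tens_m C c (idm C (ldiv C A' C')) \<in> Hom C (tens_o C A (ldiv C A' C')) (tens_o C A' (ldiv C A' C'))"
    using tens_hom[OF c id_hom[OF L]] .
  have id_\<beta>: "tens_m C (idm C A) \<beta> \<in> Hom C (tens_o C A W) (tens_o C A (ldiv C A' C'))"
    using tens_hom[OF id_hom[OF A] \<beta>] .
  have "cmp C (tens_m C (idm C A) (cmp C \<beta> (ldiv_m C A A' C' Cc c d))) (evL C A Cc)
      = cmp C (tens_m C (idm C A) \<beta>) (cmp C (tens_m C c (idm C (ldiv C A' C'))) (cmp C (evL C A' C') d))"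
    using uncurryL_comp[OF \<beta> m(1) A Cc] m(2) comp_assoc[OF c_id ev d] by simp
  also have "\<dots> = cmp C (tens_m C c \<beta>) (cmp C (evL C A' C') d)"
    using comp_assoc[OF id_\<beta> c_id comp_hom[OF ev d]] tens_factor_snd[OF c \<beta>] by simp
  also have "\<dots> = cmp C (tens_m C c (idm C W)) (cmp C (tens_m C (idm C A') \<beta>) (cmp C (evL C A' C') d))"
    using comp_assoc[OF tens_hom[OF c id_hom[OF hom_dom[OF \<beta>]]] tens_hom[OF id_hom[OF A'] \<beta>] comp_hom[OF ev d]]
      tens_factor_fst[OF c \<beta>] by simp
  finally show ?thesis
    using comp_assoc[OF tens_hom[OF id_hom[OF A'] \<beta>] ev d] by simp
qed

lemma uncurryR_comp_rdiv_m:
  assumes c: "c \<in> Hom C B B'" and d: "d \<in> Hom C C' Cc" and \<beta>: "\<beta> \<in> Hom C W (rdiv C C' B')"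
  shows "cmp C (tens_m C (cmp C \<beta> (rdiv_m C B B' C' Cc d c)) (idm C B)) (evR C Cc B) =
    cmp C (tens_m C (idm C W) c) (cmp C (cmp C (tens_m C \<beta> (idm C B')) (evR C C' B')) d)"
proof -
  have B: "B \<in> Obj C" and B': "B' \<in> Obj C" and C': "C' \<in> Obj C" and Cc: "Cc \<in> Obj C"
    using c d by (auto intro: hom_dom hom_cod)
  have L: "rdiv C C' B' \<in> Obj C" using rdiv_obj[OF B' C'] .
  note ev = evR_hom[OF B' C'] and m = rdiv_m_hom_eq[OF c d]
  have id_c: "tens_m C (idm C (rdiv C C' B')) c \<in> Hom C (tens_o C (rdiv C C' B') B) (tens_o C (rdiv C C' B') B')"
    using tens_hom[OF id_hom[OF L] c] .
  have \<beta>_id: "tens_m C \<beta> (idm C B) \<in> Hom C (tens_o C W B) (tens_o C (rdiv C C' B') B)"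
    using tens_hom[OF \<beta> id_hom[OF B]] .
  have "cmp C (tens_m C (cmp C \<beta> (rdiv_m C B B' C' Cc d c)) (idm C B)) (evR C Cc B)
      = cmp C (tens_m C \<beta> (idm C B)) (cmp C (tens_m C (idm C (rdiv C C' B')) c) (cmp C (evR C C' B') d))"
    using uncurryR_comp[OF \<beta> m(1) B Cc] m(2) comp_assoc[OF id_c ev d] by simp
  also have "\<dots> = cmp C (tens_m C \<beta> c) (cmp C (evR C C' B') d)"
    using comp_assoc[OF \<beta>_id id_c comp_hom[OF ev d]] tens_factor_fst[OF \<beta> c] by simp
  also have "\<dots> = cmp C (tens_m C (idm C W) c) (cmp C (tens_m C \<beta> (idm C B')) (cmp C (evR C C' B') d))"
    using comp_assoc[OF tens_hom[OF id_hom[OF hom_dom[OF \<beta>]] c] tens_hom[OF \<beta> id_hom[OF B']] comp_hom[OF ev d]]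
      tens_factor_snd[OF \<beta> c] by simp
  finally show ?thesis
    using comp_assoc[OF tens_hom[OF \<beta> id_hom[OF B']] ev d] by simp
qed

end

locale cm_refinement_system =
  fixes D :: "('p, 'q, 'z1) mcat_scheme" and T :: "('a, 'c, 'z2) mcat_scheme"
    and to :: "'p \<Rightarrow> 'a" and tm :: "'q \<Rightarrow> 'c"
  assumes refinement_system: "closed_monoidal_refinement_system D T to tm"
begin

sublocale D: closed_mcat D
  using refinement_system unfolding closed_monoidal_refinement_system_def by unfold_locales blast

sublocale T: closed_mcat T
  using refinement_system unfolding closed_monoidal_refinement_system_def by unfold_locales blast

lemma is_functor: "is_functor D T to tm"
  using refinement_system unfolding closed_monoidal_refinement_system_def by blast

lemma to_obj: "P \<in> Obj D \<Longrightarrow> to P \<in> Obj T"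
  using is_functor unfolding is_functor_def by blast

lemma tm_hom: "f \<in> Hom D P Q \<Longrightarrow> tm f \<in> Hom T (to P) (to Q)"
  using is_functor unfolding is_functor_def by blast

lemma tm_id: "P \<in> Obj D \<Longrightarrow> tm (idm D P) = idm T (to P)"
  using is_functor unfolding is_functor_def by blast

lemma tm_comp: "f \<in> Hom D P Q \<Longrightarrow> g \<in> Hom D Q R \<Longrightarrow> tm (cmp D f g) = cmp T (tm f) (tm g)"
  using is_functor unfolding is_functor_def by blast

lemma to_tens: "P \<in> Obj D \<Longrightarrow> Q \<in> Obj D \<Longrightarrow> to (tens_o D P Q) = tens_o T (to P) (to Q)"
  using refinement_system unfolding closed_monoidal_refinement_system_def by blast

lemma tm_tens: "f \<in> Hom D P P' \<Longrightarrow> g \<in> Hom D Q Q' \<Longrightarrow> tm (tens_m D f g) = tens_m T (tm f) (tm g)"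
  using refinement_system unfolding closed_monoidal_refinement_system_def by blast

lemma to_ldiv: "P \<in> Obj D \<Longrightarrow> R \<in> Obj D \<Longrightarrow> to (ldiv D P R) = ldiv T (to P) (to R)"
  using refinement_system unfolding closed_monoidal_refinement_system_def by blast

lemma tm_evL: "P \<in> Obj D \<Longrightarrow> R \<in> Obj D \<Longrightarrow> tm (evL D P R) = evL T (to P) (to R)"
  using refinement_system unfolding closed_monoidal_refinement_system_def by blast

lemma to_rdiv: "P \<in> Obj D \<Longrightarrow> R \<in> Obj D \<Longrightarrow> to (rdiv D R P) = rdiv T (to R) (to P)"
  using refinement_system unfolding closed_monoidal_refinement_system_def by blast

lemma tm_evR: "P \<in> Obj D \<Longrightarrow> R \<in> Obj D \<Longrightarrow> tm (evR D R P) = evR T (to R) (to P)"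
  using refinement_system unfolding closed_monoidal_refinement_system_def by blast

lemma tm_uncurryL:
  assumes g: "g \<in> Hom D W (ldiv D X Z)" and X: "X \<in> Obj D" and Z: "Z \<in> Obj D"
  shows "tm (cmp D (tens_m D (idm D X) g) (evL D X Z)) =
    cmp T (tens_m T (idm T (to X)) (tm g)) (evL T (to X) (to Z))"
  using tm_comp[OF D.tens_hom[OF D.id_hom[OF X] g] D.evL_hom[OF X Z]]
    tm_tens[OF D.id_hom[OF X] g] tm_id[OF X] tm_evL[OF X Z] by simp

lemma tm_uncurryR:
  assumes g: "g \<in> Hom D W (rdiv D Z X)" and X: "X \<in> Obj D" and Z: "Z \<in> Obj D"
  shows "tm (cmp D (tens_m D g (idm D X)) (evR D Z X)) =
    cmp T (tens_m T (tm g) (idm T (to X))) (evR T (to Z) (to X))"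
  using tm_comp[OF D.tens_hom[OF g D.id_hom[OF X]] D.evR_hom[OF X Z]]
    tm_tens[OF g D.id_hom[OF X]] tm_id[OF X] tm_evR[OF X Z] by simp

lemma derivs_comp:
  "\<alpha> \<in> derivs D tm P c Q \<Longrightarrow> \<beta> \<in> derivs D tm Q d R \<Longrightarrow> cmp D \<alpha> \<beta> \<in> derivs D tm P (cmp T c d) R"
  unfolding derivs_def using D.comp_hom tm_comp by blast

lemma id_derivs: "P \<in> Obj D \<Longrightarrow> idm D P \<in> derivs D tm P (idm T (to P)) P"
  unfolding derivs_def using D.id_hom tm_id by blast

lemma derivs_uncurryL_bij:
  assumes X: "X \<in> Obj D" and Z: "Z \<in> Obj D" and e: "e \<in> Hom T (to W) (ldiv T (to X) (to Z))"
  shows "bij_betw (\<lambda>\<beta>. cmp D (tens_m D (idm D X) \<beta>) (evL D X Z))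
    (derivs D tm W e (ldiv D X Z))
    (derivs D tm (tens_o D X W) (cmp T (tens_m T (idm T (to X)) e) (evL T (to X) (to Z))) Z)"
proof (rule bij_betw_imageI)
  show "inj_on (\<lambda>\<beta>. cmp D (tens_m D (idm D X) \<beta>) (evL D X Z)) (derivs D tm W e (ldiv D X Z))"
    using D.curryL_unique[OF X Z] unfolding inj_on_def derivs_def by blast
  have tX: "to X \<in> Obj T" and tZ: "to Z \<in> Obj T" using to_obj X Z by auto
  show "(\<lambda>\<beta>. cmp D (tens_m D (idm D X) \<beta>) (evL D X Z)) ` derivs D tm W e (ldiv D X Z) =
    derivs D tm (tens_o D X W) (cmp T (tens_m T (idm T (to X)) e) (evL T (to X) (to Z))) Z"
  proof (intro equalityI subsetI)
    fix f assume "f \<in> derivs D tm (tens_o D X W) (cmp T (tens_m T (idm T (to X)) e) (evL T (to X) (to Z))) Z"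
    then have f: "f \<in> Hom D (tens_o D X W) Z"
      and tm_f: "tm f = cmp T (tens_m T (idm T (to X)) e) (evL T (to X) (to Z))"
      unfolding derivs_def by auto
    obtain g where g: "g \<in> Hom D W (ldiv D X Z)" and f_eq: "cmp D (tens_m D (idm D X) g) (evL D X Z) = f"
      using D.curryL_ex[OF X Z f] by blast
    have "tm g = e"
      using T.curryL_unique[OF tX tZ _ e] tm_hom[OF g] tm_uncurryL[OF g X Z] f_eq tm_f
      by (simp add: to_ldiv[OF X Z])
    with g f_eq show "f \<in> (\<lambda>\<beta>. cmp D (tens_m D (idm D X) \<beta>) (evL D X Z)) ` derivs D tm W e (ldiv D X Z)"
      unfolding derivs_def by blast
  qed (auto simp: derivs_def tm_uncurryL X Z intro: D.uncurryL_hom[OF X Z])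
qed

lemma derivs_uncurryR_bij:
  assumes X: "X \<in> Obj D" and Z: "Z \<in> Obj D" and e: "e \<in> Hom T (to W) (rdiv T (to Z) (to X))"
  shows "bij_betw (\<lambda>\<beta>. cmp D (tens_m D \<beta> (idm D X)) (evR D Z X))
    (derivs D tm W e (rdiv D Z X))
    (derivs D tm (tens_o D W X) (cmp T (tens_m T e (idm T (to X))) (evR T (to Z) (to X))) Z)"
proof (rule bij_betw_imageI)
  show "inj_on (\<lambda>\<beta>. cmp D (tens_m D \<beta> (idm D X)) (evR D Z X)) (derivs D tm W e (rdiv D Z X))"
    using D.curryR_unique[OF X Z] unfolding inj_on_def derivs_def by blast
  have tX: "to X \<in> Obj T" and tZ: "to Z \<in> Obj T" using to_obj X Z by auto
  show "(\<lambda>\<beta>. cmp D (tens_m D \<beta> (idm D X)) (evR D Z X)) ` derivs D tm W e (rdiv D Z X) =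
    derivs D tm (tens_o D W X) (cmp T (tens_m T e (idm T (to X))) (evR T (to Z) (to X))) Z"
  proof (intro equalityI subsetI)
    fix f assume "f \<in> derivs D tm (tens_o D W X) (cmp T (tens_m T e (idm T (to X))) (evR T (to Z) (to X))) Z"
    then have f: "f \<in> Hom D (tens_o D W X) Z"
      and tm_f: "tm f = cmp T (tens_m T e (idm T (to X))) (evR T (to Z) (to X))"
      unfolding derivs_def by auto
    obtain g where g: "g \<in> Hom D W (rdiv D Z X)" and f_eq: "cmp D (tens_m D g (idm D X)) (evR D Z X) = f"
      using D.curryR_ex[OF X Z f] by blast
    have "tm g = e"
      using T.curryR_unique[OF tX tZ _ e] tm_hom[OF g] tm_uncurryR[OF g X Z] f_eq tm_f
      by (simp add: to_rdiv[OF X Z])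
    with g f_eq show "f \<in> (\<lambda>\<beta>. cmp D (tens_m D \<beta> (idm D X)) (evR D Z X)) ` derivs D tm W e (rdiv D Z X)"
      unfolding derivs_def by blast
  qed (auto simp: derivs_def tm_uncurryR X Z intro: D.uncurryR_hom[OF X Z])
qed

lemma pushforwardD:
  assumes "is_pushforward D T to tm A B c P P' k"
  shows "c \<in> Hom T A B" "P \<in> Obj D" "to P = A" "P' \<in> Obj D" "to P' = B"
    "k \<in> Hom D P P'" "tm k = c"
  using assms unfolding is_pushforward_def refines_def derivs_def by blast+

lemma pushforward_bij:
  assumes "is_pushforward D T to tm A B c P P' k" and "Y \<in> Obj D" and "e \<in> Hom T B (to Y)"
  shows "bij_betw (cmp D k) (derivs D tm P' e Y) (derivs D tm P (cmp T c e) Y)"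
  using assms unfolding is_pushforward_def refines_def by blast

lemma is_pushforwardI:
  assumes "c \<in> Hom T A B" "P \<in> Obj D" "to P = A" "P' \<in> Obj D" "to P' = B"
    "k \<in> Hom D P P'" "tm k = c"
    and "\<And>Y e. Y \<in> Obj D \<Longrightarrow> e \<in> Hom T B (to Y) \<Longrightarrow>
      bij_betw (cmp D k) (derivs D tm P' e Y) (derivs D tm P (cmp T c e) Y)"
  shows "is_pushforward D T to tm A B c P P' k"
  using assms unfolding is_pushforward_def refines_def derivs_def by blast

lemma pullbackD:
  assumes "is_pullback D T to tm A B c Q P' l"
  shows "c \<in> Hom T A B" "Q \<in> Obj D" "to Q = B" "P' \<in> Obj D" "to P' = A"
    "l \<in> Hom D P' Q" "tm l = c"
  using assms unfolding is_pullback_def refines_def derivs_def by blast+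

lemma pullback_bij:
  assumes "is_pullback D T to tm A B c Q P' l" and "X \<in> Obj D" and "e \<in> Hom T (to X) A"
  shows "bij_betw (\<lambda>\<beta>. cmp D \<beta> l) (derivs D tm X e P') (derivs D tm X (cmp T e c) Q)"
  using assms unfolding is_pullback_def refines_def by blast

lemma is_pullbackI:
  assumes "c \<in> Hom T A B" "Q \<in> Obj D" "to Q = B" "P' \<in> Obj D" "to P' = A"
    "l \<in> Hom D P' Q" "tm l = c"
    and "\<And>X e. X \<in> Obj D \<Longrightarrow> e \<in> Hom T (to X) A \<Longrightarrow>
      bij_betw (\<lambda>\<beta>. cmp D \<beta> l) (derivs D tm X e P') (derivs D tm X (cmp T e c) Q)"
  shows "is_pullback D T to tm A B c Q P' l"
  using assms unfolding is_pullback_def refines_def derivs_def by blast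

lemma pushforward_unique:
  assumes k1: "is_pushforward D T to tm A B c P Q1 k1" and k2: "is_pushforward D T to tm A B c P Q2 k2"
  shows "vert_iso D T to tm B Q1 Q2"
proof -
  note p1 = pushforwardD[OF k1] and p2 = pushforwardD[OF k2]
  have B: "B \<in> Obj T" using T.hom_cod[OF p1(1)] .
  have id1: "idm T B \<in> Hom T B (to Q1)" and id2: "idm T B \<in> Hom T B (to Q2)"
    using T.id_hom[OF B] p1(5) p2(5) by auto
  have c_id: "cmp T c (idm T B) = c" using T.comp_id_right[OF p1(1)] .
  have id_id: "cmp T (idm T B) (idm T B) = idm T B" using T.comp_id_left[OF T.id_hom[OF B]] .
  have "k2 \<in> cmp D k1 ` derivs D tm Q1 (idm T B) Q2"
    using bij_betw_imp_surj_on[OF pushforward_bij[OF k1 p2(4) id2]] p2 c_id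
    unfolding derivs_def by auto
  then obtain f where f: "f \<in> derivs D tm Q1 (idm T B) Q2" and k1f: "cmp D k1 f = k2" by blast
  have "k1 \<in> cmp D k2 ` derivs D tm Q2 (idm T B) Q1"
    using bij_betw_imp_surj_on[OF pushforward_bij[OF k2 p1(4) id1]] p1 c_id
    unfolding derivs_def by auto
  then obtain g where g: "g \<in> derivs D tm Q2 (idm T B) Q1" and k2g: "cmp D k2 g = k1" by blast
  have f_hom: "f \<in> Hom D Q1 Q2" and g_hom: "g \<in> Hom D Q2 Q1" using f g unfolding derivs_def by auto
  have "cmp D f g = idm D Q1"
  proof (rule inj_onD[OF bij_betw_imp_inj_on[OF pushforward_bij[OF k1 p1(4) id1]]])
    show "cmp D k1 (cmp D f g) = cmp D k1 (idm D Q1)"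
      using D.comp_assoc[OF p1(6) f_hom g_hom] k1f k2g D.comp_id_right[OF p1(6)] by simp
    show "cmp D f g \<in> derivs D tm Q1 (idm T B) Q1" using derivs_comp[OF f g] id_id by simp
    show "idm D Q1 \<in> derivs D tm Q1 (idm T B) Q1" using id_derivs[OF p1(4)] p1(5) by simp
  qed
  moreover have "cmp D g f = idm D Q2"
  proof (rule inj_onD[OF bij_betw_imp_inj_on[OF pushforward_bij[OF k2 p2(4) id2]]])
    show "cmp D k2 (cmp D g f) = cmp D k2 (idm D Q2)"
      using D.comp_assoc[OF p2(6) g_hom f_hom] k1f k2g D.comp_id_right[OF p2(6)] by simp
    show "cmp D g f \<in> derivs D tm Q2 (idm T B) Q2" using derivs_comp[OF g f] id_id by simp
    show "idm D Q2 \<in> derivs D tm Q2 (idm T B) Q2" using id_derivs[OF p2(4)] p2(5) by simp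
  qed
  ultimately show ?thesis
    using f g p1 p2 unfolding vert_iso_def refines_def is_iso_def derivs_def by blast
qed

lemma pullback_unique:
  assumes l1: "is_pullback D T to tm A B c Q P1 l1" and l2: "is_pullback D T to tm A B c Q P2 l2"
  shows "vert_iso D T to tm A P1 P2"
proof -
  note p1 = pullbackD[OF l1] and p2 = pullbackD[OF l2]
  have A: "A \<in> Obj T" using T.hom_dom[OF p1(1)] .
  have id1: "idm T A \<in> Hom T (to P1) A" and id2: "idm T A \<in> Hom T (to P2) A"
    using T.id_hom[OF A] p1(5) p2(5) by auto
  have id_c: "cmp T (idm T A) c = c" using T.comp_id_left[OF p1(1)] .
  have id_id: "cmp T (idm T A) (idm T A) = idm T A" using T.comp_id_left[OF T.id_hom[OF A]] .
  have "l1 \<in> (\<lambda>\<beta>. cmp D \<beta> l2) ` derivs D tm P1 (idm T A) P2"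
    using bij_betw_imp_surj_on[OF pullback_bij[OF l2 p1(4) id1]] p1 id_c
    unfolding derivs_def by auto
  then obtain f where f: "f \<in> derivs D tm P1 (idm T A) P2" and fl2: "cmp D f l2 = l1" by blast
  have "l2 \<in> (\<lambda>\<beta>. cmp D \<beta> l1) ` derivs D tm P2 (idm T A) P1"
    using bij_betw_imp_surj_on[OF pullback_bij[OF l1 p2(4) id2]] p2 id_c
    unfolding derivs_def by auto
  then obtain g where g: "g \<in> derivs D tm P2 (idm T A) P1" and gl1: "cmp D g l1 = l2" by blast
  have f_hom: "f \<in> Hom D P1 P2" and g_hom: "g \<in> Hom D P2 P1" using f g unfolding derivs_def by auto
  have "cmp D f g = idm D P1"
  proof (rule inj_onD[OF bij_betw_imp_inj_on[OF pullback_bij[OF l1 p1(4) id1]]])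
    show "cmp D (cmp D f g) l1 = cmp D (idm D P1) l1"
      using D.comp_assoc[OF f_hom g_hom p1(6)] fl2 gl1 D.comp_id_left[OF p1(6)] by simp
    show "cmp D f g \<in> derivs D tm P1 (idm T A) P1" using derivs_comp[OF f g] id_id by simp
    show "idm D P1 \<in> derivs D tm P1 (idm T A) P1" using id_derivs[OF p1(4)] p1(5) by simp
  qed
  moreover have "cmp D g f = idm D P2"
  proof (rule inj_onD[OF bij_betw_imp_inj_on[OF pullback_bij[OF l2 p2(4) id2]]])
    show "cmp D (cmp D g f) l2 = cmp D (idm D P2) l2"
      using D.comp_assoc[OF g_hom f_hom p2(6)] fl2 gl1 D.comp_id_left[OF p2(6)] by simp
    show "cmp D g f \<in> derivs D tm P2 (idm T A) P2" using derivs_comp[OF g f] id_id by simp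
    show "idm D P2 \<in> derivs D tm P2 (idm T A) P2" using id_derivs[OF p2(4)] p2(5) by simp
  qed
  ultimately show ?thesis
    using f g p1 p2 unfolding vert_iso_def refines_def is_iso_def derivs_def by blast
qed

lemma pushforward_comp:
  assumes k: "is_pushforward D T to tm A B c P Q k" and k': "is_pushforward D T to tm B E c' Q R k'"
  shows "is_pushforward D T to tm A E (cmp T c c') P R (cmp D k k')"
proof -
  note p = pushforwardD[OF k] and p' = pushforwardD[OF k']
  show ?thesis
  proof (rule is_pushforwardI[OF T.comp_hom[OF p(1) p'(1)] p(2,3) p'(4,5) D.comp_hom[OF p(6) p'(6)]])
    show "tm (cmp D k k') = cmp T c c'" using tm_comp[OF p(6) p'(6)] p(7) p'(7) by simp
    fix Y e assume Y: "Y \<in> Obj D" and e: "e \<in> Hom T E (to Y)"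
    have c'e: "cmp T c' e \<in> Hom T B (to Y)" using T.comp_hom[OF p'(1) e] .
    have "bij_betw (cmp D k \<circ> cmp D k') (derivs D tm R e Y) (derivs D tm P (cmp T c (cmp T c' e)) Y)"
      using bij_betw_trans[OF pushforward_bij[OF k' Y e] pushforward_bij[OF k Y c'e]] .
    moreover have "cmp D (cmp D k k') \<beta> = (cmp D k \<circ> cmp D k') \<beta>" if "\<beta> \<in> derivs D tm R e Y" for \<beta>
      using that D.comp_assoc[OF p(6) p'(6)] unfolding derivs_def by auto
    ultimately have "bij_betw (cmp D (cmp D k k')) (derivs D tm R e Y) (derivs D tm P (cmp T c (cmp T c' e)) Y)"
      by (rule bij_betw_cong[THEN iffD2, rotated])
    then show "bij_betw (cmp D (cmp D k k')) (derivs D tm R e Y) (derivs D tm P (cmp T (cmp T c c') e) Y)"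
      by (simp only: T.comp_assoc[OF p(1) p'(1) e])
  qed
qed

lemma pushforward_tens_right:
  assumes k: "is_pushforward D T to tm A A' c P P' k" and X: "X \<in> Obj D"
  shows "is_pushforward D T to tm (tens_o T A (to X)) (tens_o T A' (to X)) (tens_m T c (idm T (to X)))
    (tens_o D P X) (tens_o D P' X) (tens_m D k (idm D X))"
proof -
  note p = pushforwardD[OF k]
  have tX: "to X \<in> Obj T" using to_obj[OF X] .
  show ?thesis
  proof (rule is_pushforwardI[OF T.tens_hom[OF p(1) T.id_hom[OF tX]] D.tens_obj[OF p(2) X] _
        D.tens_obj[OF p(4) X] _ D.tens_hom[OF p(6) D.id_hom[OF X]]])
    show "to (tens_o D P X) = tens_o T A (to X)" and "to (tens_o D P' X) = tens_o T A' (to X)"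
      using to_tens[OF p(2) X] to_tens[OF p(4) X] p(3,5) by simp_all
    show "tm (tens_m D k (idm D X)) = tens_m T c (idm T (to X))"
      using tm_tens[OF p(6) D.id_hom[OF X]] tm_id[OF X] p(7) by simp
    fix Z e assume Z: "Z \<in> Obj D" and e: "e \<in> Hom T (tens_o T A' (to X)) (to Z)"
    obtain \<epsilon> where \<epsilon>: "\<epsilon> \<in> Hom T A' (rdiv T (to Z) (to X))"
      and e_eq: "cmp T (tens_m T \<epsilon> (idm T (to X))) (evR T (to Z) (to X)) = e"
      using T.curryR_ex[OF tX to_obj[OF Z] e] by blast
    define U where "U = (\<lambda>\<beta>. cmp D (tens_m D \<beta> (idm D X)) (evR D Z X))"
    have U': "bij_betw U (derivs D tm P' \<epsilon> (rdiv D Z X)) (derivs D tm (tens_o D P' X) e Z)"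
      using derivs_uncurryR_bij[OF X Z, of \<epsilon> P'] \<epsilon> p(5) e_eq unfolding U_def by simp
    have K: "bij_betw (cmp D k) (derivs D tm P' \<epsilon> (rdiv D Z X)) (derivs D tm P (cmp T c \<epsilon>) (rdiv D Z X))"
      using pushforward_bij[OF k D.rdiv_obj[OF X Z]] \<epsilon> to_rdiv[OF X Z] by simp
    have U: "bij_betw U (derivs D tm P (cmp T c \<epsilon>) (rdiv D Z X))
        (derivs D tm (tens_o D P X) (cmp T (tens_m T c (idm T (to X))) e) Z)"
      using derivs_uncurryR_bij[OF X Z, of "cmp T c \<epsilon>" P] T.comp_hom[OF p(1) \<epsilon>] p(3)
        T.uncurryR_comp[OF p(1) \<epsilon> tX to_obj[OF Z]] e_eq
      unfolding U_def by simp
    have "bij_betw (U \<circ> cmp D k) (derivs D tm P' \<epsilon> (rdiv D Z X))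
        (derivs D tm (tens_o D P X) (cmp T (tens_m T c (idm T (to X))) e) Z)"
      using bij_betw_trans[OF K U] .
    moreover have "(cmp D (tens_m D k (idm D X)) \<circ> U) \<beta> = (U \<circ> cmp D k) \<beta>"
      if "\<beta> \<in> derivs D tm P' \<epsilon> (rdiv D Z X)" for \<beta>
      using that D.uncurryR_comp[OF p(6) _ X Z] unfolding U_def derivs_def by simp
    ultimately have "bij_betw (cmp D (tens_m D k (idm D X)) \<circ> U) (derivs D tm P' \<epsilon> (rdiv D Z X))
        (derivs D tm (tens_o D P X) (cmp T (tens_m T c (idm T (to X))) e) Z)"
      by (rule bij_betw_cong[THEN iffD2, rotated])
    then show "bij_betw (cmp D (tens_m D k (idm D X))) (derivs D tm (tens_o D P' X) e Z)
        (derivs D tm (tens_o D P X) (cmp T (tens_m T c (idm T (to X))) e) Z)"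
      using bij_betw_comp_iff[OF U'] by blast
  qed
qed

lemma pushforward_tens_left:
  assumes k: "is_pushforward D T to tm A A' c P P' k" and X: "X \<in> Obj D"
  shows "is_pushforward D T to tm (tens_o T (to X) A) (tens_o T (to X) A') (tens_m T (idm T (to X)) c)
    (tens_o D X P) (tens_o D X P') (tens_m D (idm D X) k)"
proof -
  note p = pushforwardD[OF k]
  have tX: "to X \<in> Obj T" using to_obj[OF X] .
  show ?thesis
  proof (rule is_pushforwardI[OF T.tens_hom[OF T.id_hom[OF tX] p(1)] D.tens_obj[OF X p(2)] _
        D.tens_obj[OF X p(4)] _ D.tens_hom[OF D.id_hom[OF X] p(6)]])
    show "to (tens_o D X P) = tens_o T (to X) A" and "to (tens_o D X P') = tens_o T (to X) A'"
      using to_tens[OF X p(2)] to_tens[OF X p(4)] p(3,5) by simp_all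
    show "tm (tens_m D (idm D X) k) = tens_m T (idm T (to X)) c"
      using tm_tens[OF D.id_hom[OF X] p(6)] tm_id[OF X] p(7) by simp
    fix Z e assume Z: "Z \<in> Obj D" and e: "e \<in> Hom T (tens_o T (to X) A') (to Z)"
    obtain \<epsilon> where \<epsilon>: "\<epsilon> \<in> Hom T A' (ldiv T (to X) (to Z))"
      and e_eq: "cmp T (tens_m T (idm T (to X)) \<epsilon>) (evL T (to X) (to Z)) = e"
      using T.curryL_ex[OF tX to_obj[OF Z] e] by blast
    define U where "U = (\<lambda>\<beta>. cmp D (tens_m D (idm D X) \<beta>) (evL D X Z))"
    have U': "bij_betw U (derivs D tm P' \<epsilon> (ldiv D X Z)) (derivs D tm (tens_o D X P') e Z)"
      using derivs_uncurryL_bij[OF X Z, of \<epsilon> P'] \<epsilon> p(5) e_eq unfolding U_def by simp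
    have K: "bij_betw (cmp D k) (derivs D tm P' \<epsilon> (ldiv D X Z)) (derivs D tm P (cmp T c \<epsilon>) (ldiv D X Z))"
      using pushforward_bij[OF k D.ldiv_obj[OF X Z]] \<epsilon> to_ldiv[OF X Z] by simp
    have U: "bij_betw U (derivs D tm P (cmp T c \<epsilon>) (ldiv D X Z))
        (derivs D tm (tens_o D X P) (cmp T (tens_m T (idm T (to X)) c) e) Z)"
      using derivs_uncurryL_bij[OF X Z, of "cmp T c \<epsilon>" P] T.comp_hom[OF p(1) \<epsilon>] p(3)
        T.uncurryL_comp[OF p(1) \<epsilon> tX to_obj[OF Z]] e_eq
      unfolding U_def by simp
    have "bij_betw (U \<circ> cmp D k) (derivs D tm P' \<epsilon> (ldiv D X Z))
        (derivs D tm (tens_o D X P) (cmp T (tens_m T (idm T (to X)) c) e) Z)"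
      using bij_betw_trans[OF K U] .
    moreover have "(cmp D (tens_m D (idm D X) k) \<circ> U) \<beta> = (U \<circ> cmp D k) \<beta>"
      if "\<beta> \<in> derivs D tm P' \<epsilon> (ldiv D X Z)" for \<beta>
      using that D.uncurryL_comp[OF p(6) _ X Z] unfolding U_def derivs_def by simp
    ultimately have "bij_betw (cmp D (tens_m D (idm D X) k) \<circ> U) (derivs D tm P' \<epsilon> (ldiv D X Z))
        (derivs D tm (tens_o D X P) (cmp T (tens_m T (idm T (to X)) c) e) Z)"
      by (rule bij_betw_cong[THEN iffD2, rotated])
    then show "bij_betw (cmp D (tens_m D (idm D X) k)) (derivs D tm (tens_o D X P') e Z)
        (derivs D tm (tens_o D X P) (cmp T (tens_m T (idm T (to X)) c) e) Z)"
      using bij_betw_comp_iff[OF U'] by blast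
  qed
qed

lemma pushforward_tens:
  assumes k1: "is_pushforward D T to tm A A' c P P' k1" and k2: "is_pushforward D T to tm B B' d Q Q' k2"
  shows "is_pushforward D T to tm (tens_o T A B) (tens_o T A' B') (tens_m T c d)
    (tens_o D P Q) (tens_o D P' Q') (tens_m D k1 k2)"
proof -
  note p1 = pushforwardD[OF k1] and p2 = pushforwardD[OF k2]
  have "is_pushforward D T to tm (tens_o T A B) (tens_o T A' B')
      (cmp T (tens_m T (idm T A) d) (tens_m T c (idm T B'))) (tens_o D P Q) (tens_o D P' Q')
      (cmp D (tens_m D (idm D P) k2) (tens_m D k1 (idm D Q')))"
    using pushforward_comp[OF pushforward_tens_left[OF k2 p1(2), unfolded p1(3)]
        pushforward_tens_right[OF k1 p2(4), unfolded p2(5)]] .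
  then show ?thesis
    using D.tens_factor_snd[OF p1(6) p2(6)] T.tens_factor_snd[OF p1(1) p2(1)] by simp
qed

lemma tm_ldiv_m:
  assumes k: "k \<in> Hom D P P'" and l: "l \<in> Hom D R' R"
  shows "tm (ldiv_m D P P' R' R k l) = ldiv_m T (to P) (to P') (to R') (to R) (tm k) (tm l)"
proof -
  have P: "P \<in> Obj D" and P': "P' \<in> Obj D" and R': "R' \<in> Obj D" and R: "R \<in> Obj D"
    using k l by (auto intro: D.hom_dom D.hom_cod)
  note res = D.ldiv_m_hom_eq[OF k l]
  have id_res: "idm D (ldiv D P' R') \<in> Hom D (ldiv D P' R') (ldiv D P' R')"
    using D.id_hom[OF D.ldiv_obj[OF P' R']] .
  show ?thesis
  proof (rule T.ldiv_m_eqI[OF tm_hom[OF k] tm_hom[OF l], symmetric])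
    show "tm (ldiv_m D P P' R' R k l) \<in> Hom T (ldiv T (to P') (to R')) (ldiv T (to P) (to R))"
      using tm_hom[OF res(1)] to_ldiv[OF P' R'] to_ldiv[OF P R] by simp
    have "cmp T (tens_m T (idm T (to P)) (tm (ldiv_m D P P' R' R k l))) (evL T (to P) (to R))
        = tm (cmp D (cmp D (tens_m D k (idm D (ldiv D P' R'))) (evL D P' R')) l)"
      using tm_uncurryL[OF res(1) P R] res(2) by simp
    then show "cmp T (tens_m T (idm T (to P)) (tm (ldiv_m D P P' R' R k l))) (evL T (to P) (to R)) =
        cmp T (cmp T (tens_m T (tm k) (idm T (ldiv T (to P') (to R')))) (evL T (to P') (to R'))) (tm l)"
      using tm_comp[OF D.comp_hom[OF D.tens_hom[OF k id_res] D.evL_hom[OF P' R']] l]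
        tm_comp[OF D.tens_hom[OF k id_res] D.evL_hom[OF P' R']] tm_tens[OF k id_res]
        tm_id[OF D.ldiv_obj[OF P' R']] to_ldiv[OF P' R'] tm_evL[OF P' R'] by simp
  qed
qed

lemma tm_rdiv_m:
  assumes k: "k \<in> Hom D Q Q'" and l: "l \<in> Hom D R' R"
  shows "tm (rdiv_m D Q Q' R' R l k) = rdiv_m T (to Q) (to Q') (to R') (to R) (tm l) (tm k)"
proof -
  have Q: "Q \<in> Obj D" and Q': "Q' \<in> Obj D" and R': "R' \<in> Obj D" and R: "R \<in> Obj D"
    using k l by (auto intro: D.hom_dom D.hom_cod)
  note res = D.rdiv_m_hom_eq[OF k l]
  have id_res: "idm D (rdiv D R' Q') \<in> Hom D (rdiv D R' Q') (rdiv D R' Q')"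
    using D.id_hom[OF D.rdiv_obj[OF Q' R']] .
  show ?thesis
  proof (rule T.rdiv_m_eqI[OF tm_hom[OF k] tm_hom[OF l], symmetric])
    show "tm (rdiv_m D Q Q' R' R l k) \<in> Hom T (rdiv T (to R') (to Q')) (rdiv T (to R) (to Q))"
      using tm_hom[OF res(1)] to_rdiv[OF Q' R'] to_rdiv[OF Q R] by simp
    have "cmp T (tens_m T (tm (rdiv_m D Q Q' R' R l k)) (idm T (to Q))) (evR T (to R) (to Q))
        = tm (cmp D (cmp D (tens_m D (idm D (rdiv D R' Q')) k) (evR D R' Q')) l)"
      using tm_uncurryR[OF res(1) Q R] res(2) by simp
    then show "cmp T (tens_m T (tm (rdiv_m D Q Q' R' R l k)) (idm T (to Q))) (evR T (to R) (to Q)) =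
        cmp T (cmp T (tens_m T (idm T (rdiv T (to R') (to Q'))) (tm k)) (evR T (to R') (to Q'))) (tm l)"
      using tm_comp[OF D.comp_hom[OF D.tens_hom[OF id_res k] D.evR_hom[OF Q' R']] l]
        tm_comp[OF D.tens_hom[OF id_res k] D.evR_hom[OF Q' R']] tm_tens[OF id_res k]
        tm_id[OF D.rdiv_obj[OF Q' R']] to_rdiv[OF Q' R'] tm_evR[OF Q' R'] by simp
  qed
qed

lemma ldiv_pullback:
  assumes k: "is_pushforward D T to tm A A' c P P' k" and l: "is_pullback D T to tm C' C d R R' l"
  shows "is_pullback D T to tm (ldiv T A' C') (ldiv T A C) (ldiv_m T A A' C' C c d)
    (ldiv D P R) (ldiv D P' R') (ldiv_m D P P' R' R k l)"
proof -
  note p = pushforwardD[OF k] and q = pullbackD[OF l]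
  note res = D.ldiv_m_hom_eq[OF p(6) q(6)] and m = T.ldiv_m_hom_eq[OF p(1) q(1)]
  have A': "A' \<in> Obj T" and C': "C' \<in> Obj T" using T.hom_cod[OF p(1)] T.hom_dom[OF q(1)] .
  have tm_res: "tm (ldiv_m D P P' R' R k l) = ldiv_m T A A' C' C c d"
    using tm_ldiv_m[OF p(6) q(6)] p q by simp
  show ?thesis
  proof (rule is_pullbackI[OF m(1) D.ldiv_obj[OF p(2) q(2)] _ D.ldiv_obj[OF p(4) q(4)] _ res(1) tm_res])
    show "to (ldiv D P R) = ldiv T A C" and "to (ldiv D P' R') = ldiv T A' C'"
      using to_ldiv[OF p(2) q(2)] to_ldiv[OF p(4) q(4)] p q by simp_all
    fix W e assume W: "W \<in> Obj D" and e: "e \<in> Hom T (to W) (ldiv T A' C')"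
    define e' where "e' = cmp T (tens_m T (idm T A') e) (evL T A' C')"
    have e': "e' \<in> Hom T (to (tens_o D P' W)) C'"
      unfolding e'_def using T.uncurryL_hom[OF A' C' e] to_tens[OF p(4) W] p(5) by simp
    have e'd: "cmp T e' d \<in> Hom T (tens_o T A' (to W)) (to R)"
      using T.comp_hom[OF e' q(1)] to_tens[OF p(4) W] p(5) q(3) by simp
    have U': "bij_betw (\<lambda>\<beta>. cmp D (tens_m D (idm D P') \<beta>) (evL D P' R'))
        (derivs D tm W e (ldiv D P' R')) (derivs D tm (tens_o D P' W) e' R')"
      using derivs_uncurryL_bij[OF p(4) q(4), of e W] e p(5) q(5) unfolding e'_def by simp
    have U: "bij_betw (\<lambda>\<beta>. cmp D (tens_m D (idm D P) \<beta>) (evL D P R))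
        (derivs D tm W (cmp T e (ldiv_m T A A' C' C c d)) (ldiv D P R))
        (derivs D tm (tens_o D P W) (cmp T (tens_m T c (idm T (to W))) (cmp T e' d)) R)"
      using derivs_uncurryL_bij[OF p(2) q(2), of "cmp T e (ldiv_m T A A' C' C c d)" W]
        T.comp_hom[OF e m(1)] T.uncurryL_comp_ldiv_m[OF p(1) q(1) e] p(3) q(3)
      unfolding e'_def by simp
    have "bij_betw ((cmp D (tens_m D k (idm D W)) \<circ> (\<lambda>\<beta>. cmp D \<beta> l)) \<circ>
          (\<lambda>\<beta>. cmp D (tens_m D (idm D P') \<beta>) (evL D P' R')))
        (derivs D tm W e (ldiv D P' R'))
        (derivs D tm (tens_o D P W) (cmp T (tens_m T c (idm T (to W))) (cmp T e' d)) R)"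
      using bij_betw_trans[OF U' bij_betw_trans[OF pullback_bij[OF l D.tens_obj[OF p(4) W] e']
          pushforward_bij[OF pushforward_tens_right[OF k W] q(2) e'd]]] .
    moreover have "((\<lambda>\<beta>. cmp D (tens_m D (idm D P) \<beta>) (evL D P R)) \<circ> (\<lambda>\<beta>. cmp D \<beta> (ldiv_m D P P' R' R k l))) \<beta> =
        ((cmp D (tens_m D k (idm D W)) \<circ> (\<lambda>\<beta>. cmp D \<beta> l)) \<circ>
          (\<lambda>\<beta>. cmp D (tens_m D (idm D P') \<beta>) (evL D P' R'))) \<beta>"
      if "\<beta> \<in> derivs D tm W e (ldiv D P' R')" for \<beta>
      using that D.uncurryL_comp_ldiv_m[OF p(6) q(6)] unfolding derivs_def by simp
    ultimately have "bij_betw ((\<lambda>\<beta>. cmp D (tens_m D (idm D P) \<beta>) (evL D P R)) \<circ>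
        (\<lambda>\<beta>. cmp D \<beta> (ldiv_m D P P' R' R k l)))
        (derivs D tm W e (ldiv D P' R'))
        (derivs D tm (tens_o D P W) (cmp T (tens_m T c (idm T (to W))) (cmp T e' d)) R)"
      by (rule bij_betw_cong[THEN iffD2, rotated])
    moreover have "(\<lambda>\<beta>. cmp D \<beta> (ldiv_m D P P' R' R k l)) ` derivs D tm W e (ldiv D P' R')
        \<subseteq> derivs D tm W (cmp T e (ldiv_m T A A' C' C c d)) (ldiv D P R)"
      using derivs_comp[of _ W e "ldiv D P' R'" "ldiv_m D P P' R' R k l"] res(1) tm_res
      unfolding derivs_def by blast
    ultimately show "bij_betw (\<lambda>\<beta>. cmp D \<beta> (ldiv_m D P P' R' R k l)) (derivs D tm W e (ldiv D P' R'))
        (derivs D tm W (cmp T e (ldiv_m T A A' C' C c d)) (ldiv D P R))"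
      using bij_betw_comp_iff2[OF U] by blast
  qed
qed

lemma rdiv_pullback:
  assumes k: "is_pushforward D T to tm B B' c Q Q' k" and l: "is_pullback D T to tm C' C d R R' l"
  shows "is_pullback D T to tm (rdiv T C' B') (rdiv T C B) (rdiv_m T B B' C' C d c)
    (rdiv D R Q) (rdiv D R' Q') (rdiv_m D Q Q' R' R l k)"
proof -
  note p = pushforwardD[OF k] and q = pullbackD[OF l]
  note res = D.rdiv_m_hom_eq[OF p(6) q(6)] and m = T.rdiv_m_hom_eq[OF p(1) q(1)]
  have B': "B' \<in> Obj T" and C': "C' \<in> Obj T" using T.hom_cod[OF p(1)] T.hom_dom[OF q(1)] .
  have tm_res: "tm (rdiv_m D Q Q' R' R l k) = rdiv_m T B B' C' C d c"
    using tm_rdiv_m[OF p(6) q(6)] p q by simp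
  show ?thesis
  proof (rule is_pullbackI[OF m(1) D.rdiv_obj[OF p(2) q(2)] _ D.rdiv_obj[OF p(4) q(4)] _ res(1) tm_res])
    show "to (rdiv D R Q) = rdiv T C B" and "to (rdiv D R' Q') = rdiv T C' B'"
      using to_rdiv[OF p(2) q(2)] to_rdiv[OF p(4) q(4)] p q by simp_all
    fix W e assume W: "W \<in> Obj D" and e: "e \<in> Hom T (to W) (rdiv T C' B')"
    define e' where "e' = cmp T (tens_m T e (idm T B')) (evR T C' B')"
    have e': "e' \<in> Hom T (to (tens_o D W Q')) C'"
      unfolding e'_def using T.uncurryR_hom[OF B' C' e] to_tens[OF W p(4)] p(5) by simp
    have e'd: "cmp T e' d \<in> Hom T (tens_o T (to W) B') (to R)"
      using T.comp_hom[OF e' q(1)] to_tens[OF W p(4)] p(5) q(3) by simp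
    have U': "bij_betw (\<lambda>\<beta>. cmp D (tens_m D \<beta> (idm D Q')) (evR D R' Q'))
        (derivs D tm W e (rdiv D R' Q')) (derivs D tm (tens_o D W Q') e' R')"
      using derivs_uncurryR_bij[OF p(4) q(4), of e W] e p(5) q(5) unfolding e'_def by simp
    have U: "bij_betw (\<lambda>\<beta>. cmp D (tens_m D \<beta> (idm D Q)) (evR D R Q))
        (derivs D tm W (cmp T e (rdiv_m T B B' C' C d c)) (rdiv D R Q))
        (derivs D tm (tens_o D W Q) (cmp T (tens_m T (idm T (to W)) c) (cmp T e' d)) R)"
      using derivs_uncurryR_bij[OF p(2) q(2), of "cmp T e (rdiv_m T B B' C' C d c)" W]
        T.comp_hom[OF e m(1)] T.uncurryR_comp_rdiv_m[OF p(1) q(1) e] p(3) q(3)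
      unfolding e'_def by simp
    have "bij_betw ((cmp D (tens_m D (idm D W) k) \<circ> (\<lambda>\<beta>. cmp D \<beta> l)) \<circ>
          (\<lambda>\<beta>. cmp D (tens_m D \<beta> (idm D Q')) (evR D R' Q')))
        (derivs D tm W e (rdiv D R' Q'))
        (derivs D tm (tens_o D W Q) (cmp T (tens_m T (idm T (to W)) c) (cmp T e' d)) R)"
      using bij_betw_trans[OF U' bij_betw_trans[OF pullback_bij[OF l D.tens_obj[OF W p(4)] e']
          pushforward_bij[OF pushforward_tens_left[OF k W] q(2) e'd]]] .
    moreover have "((\<lambda>\<beta>. cmp D (tens_m D \<beta> (idm D Q)) (evR D R Q)) \<circ> (\<lambda>\<beta>. cmp D \<beta> (rdiv_m D Q Q' R' R l k))) \<beta> =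
        ((cmp D (tens_m D (idm D W) k) \<circ> (\<lambda>\<beta>. cmp D \<beta> l)) \<circ>
          (\<lambda>\<beta>. cmp D (tens_m D \<beta> (idm D Q')) (evR D R' Q'))) \<beta>"
      if "\<beta> \<in> derivs D tm W e (rdiv D R' Q')" for \<beta>
      using that D.uncurryR_comp_rdiv_m[OF p(6) q(6)] unfolding derivs_def by simp
    ultimately have "bij_betw ((\<lambda>\<beta>. cmp D (tens_m D \<beta> (idm D Q)) (evR D R Q)) \<circ>
        (\<lambda>\<beta>. cmp D \<beta> (rdiv_m D Q Q' R' R l k)))
        (derivs D tm W e (rdiv D R' Q'))
        (derivs D tm (tens_o D W Q) (cmp T (tens_m T (idm T (to W)) c) (cmp T e' d)) R)"
      by (rule bij_betw_cong[THEN iffD2, rotated])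
    moreover have "(\<lambda>\<beta>. cmp D \<beta> (rdiv_m D Q Q' R' R l k)) ` derivs D tm W e (rdiv D R' Q')
        \<subseteq> derivs D tm W (cmp T e (rdiv_m T B B' C' C d c)) (rdiv D R Q)"
      using derivs_comp[of _ W e "rdiv D R' Q'" "rdiv_m D Q Q' R' R l k"] res(1) tm_res
      unfolding derivs_def by blast
    ultimately show "bij_betw (\<lambda>\<beta>. cmp D \<beta> (rdiv_m D Q Q' R' R l k)) (derivs D tm W e (rdiv D R' Q'))
        (derivs D tm W (cmp T e (rdiv_m T B B' C' C d c)) (rdiv D R Q))"
      using bij_betw_comp_iff2[OF U] by blast
  qed
qed

end

theorem proposition2p4:
  fixes D :: "('p, 'q) mcat" and T :: "('a, 'c) mcat"
    and to :: "'p \<Rightarrow> 'a" and tm :: "'q \<Rightarrow> 'c"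
  assumes "closed_monoidal_refinement_system D T to tm"
  shows
   "(\<forall>A A' B B' c d P Q P' Q' S k1 k2 k3.
       is_pushforward D T to tm A A' c P P' k1 \<longrightarrow>
       is_pushforward D T to tm B B' d Q Q' k2 \<longrightarrow>
       is_pushforward D T to tm (tens_o T A B) (tens_o T A' B') (tens_m T c d)
                      (tens_o D P Q) S k3 \<longrightarrow>
       vert_iso D T to tm (tens_o T A' B') S (tens_o D P' Q'))
  \<and> (\<forall>A A' C C' c d P R P' R' S k l1 l2.
       is_pushforward D T to tm A A' c P P' k \<longrightarrow>
       is_pullback D T to tm C' C d R R' l1 \<longrightarrow>
       is_pullback D T to tm (ldiv T A' C') (ldiv T A C) (ldiv_m T A A' C' C c d)
                   (ldiv D P R) S l2 \<longrightarrow>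
       vert_iso D T to tm (ldiv T A' C') (ldiv D P' R') S)
  \<and> (\<forall>B B' C C' c d Q R Q' R' S k l1 l2.
       is_pushforward D T to tm B B' c Q Q' k \<longrightarrow>
       is_pullback D T to tm C' C d R R' l1 \<longrightarrow>
       is_pullback D T to tm (rdiv T C' B') (rdiv T C B) (rdiv_m T B B' C' C d c)
                   (rdiv D R Q) S l2 \<longrightarrow>
       vert_iso D T to tm (rdiv T C' B') (rdiv D R' Q') S)"
proof -
  interpret cm_refinement_system D T to tm
    using assms by unfold_locales
  show ?thesis
    by (intro conjI allI impI)
      (blast intro: pushforward_unique pushforward_tens pullback_unique ldiv_pullback rdiv_pullback)+
qed

end
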